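(* Let $K$ be a positive semiring and let $H=(V,E)$ be a hypergraph with the local-to-global consistency property for $K$-relations. Then for every $W\subseteq V$, the induced hypergraph $H[W]$ also has the local-to-global consistency property for $K$-relations.
   Context: Every attribute has a nonempty domain $\mathrm{Dom}(A)$. A commutative semiring $(K,+,\cdot,0,1)$ with $0\neq 1$ is positive if $a+b=0$ implies $a=b=0$, and $ab=0$ implies $a=0$ or $b=0$. For a finite set of attributes $X$, $\mathrm{Tup}(X)$ is the set of maps assigning to each $A\in X$ an element of $\mathrm{Dom}(A)$; $t[Y]$ is restriction; $XY=X\cup Y$. A $K$-relation over $X$ is a map $R:\mathrm{Tup}(X)\to K$ with finite support $R'=\{t:R(t)\neq0\}$; its marginal on $Y\subseteq X$ is $R[Y](u)=\sum_{r\in R',r[Y]=u}R(r)$. $R\equiv S$ means $aR=bS$ for nonzero $a,b\in K$. $R$ over $X$ and $S$ over $Y$ are consistent if some $K$-relation $T$ over $XY$ has $R\equiv T[X]$, $S\equiv T[Y]$. A collection $R_1,\dots,R_m$ ($R_i$ over $X_i$) is pairwise consistent if every two members are consistent, and globally consistent if some $K$-relation $T$ over $X_1\cup\cdots\cup X_m$ satisfies $R_i\equiv T[X_i]$ for all $i$. A hypergraph $H=(V,E)$ (finite set $V$ of attributes, hyperedges nonempty subsets of $V$) with hyperedges $X_1,\dots,X_m$ has the local-to-global consistency property for $K$-relations if every pairwise consistent collection of $K$-relations $R_1,\ldots,R_m$ with $R_i$ over $X_i$ is globally consistent. For $W\subseteq V$, $H[W]=(W,\{X\cap W:X\in E\}\setminus\{\emptyset\})$.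 *)

theory Defs
  imports Main "HOL-Library.FuncSet"
begin

text \<open>Attributes have type 'a, domain values type 'v; Dom assigns each attribute its domain.
Tuples over X are the extensional functions in PiE X Dom; restriction is 'restrict'.\<close>

definition positive_semiring :: "'k::comm_semiring_1 itself \<Rightarrow> bool" where
  "positive_semiring _ \<longleftrightarrow>
     (\<forall>a b::'k. a + b = 0 \<longrightarrow> a = 0 \<and> b = 0) \<and>
     (\<forall>a b::'k. a * b = 0 \<longrightarrow> a = 0 \<or> b = 0)"

definition Tup :: "('a \<Rightarrow> 'v set) \<Rightarrow> 'a set \<Rightarrow> ('a \<Rightarrow> 'v) set" where
  "Tup Dom X = PiE X Dom"

definition supp :: "(('a \<Rightarrow> 'v) \<Rightarrow> 'k::zero) \<Rightarrow> ('a \<Rightarrow> 'v) set" where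
  "supp R = {t. R t \<noteq> 0}"

definition is_krel :: "('a \<Rightarrow> 'v set) \<Rightarrow> 'a set \<Rightarrow> (('a \<Rightarrow> 'v) \<Rightarrow> 'k::zero) \<Rightarrow> bool" where
  "is_krel Dom X R \<longleftrightarrow> supp R \<subseteq> Tup Dom X \<and> finite (supp R)"

definition marginal :: "(('a \<Rightarrow> 'v) \<Rightarrow> 'k::comm_monoid_add) \<Rightarrow> 'a set \<Rightarrow> ('a \<Rightarrow> 'v) \<Rightarrow> 'k" where
  "marginal R Y u = (\<Sum>r\<in>{r\<in>supp R. restrict r Y = u}. R r)"

definition krel_equiv :: "(('a \<Rightarrow> 'v) \<Rightarrow> 'k::semiring_0) \<Rightarrow> (('a \<Rightarrow> 'v) \<Rightarrow> 'k) \<Rightarrow> bool" where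
  "krel_equiv R S \<longleftrightarrow> (\<exists>a b. a \<noteq> 0 \<and> b \<noteq> 0 \<and> (\<forall>t. a * R t = b * S t))"

definition consistent ::
  "('a \<Rightarrow> 'v set) \<Rightarrow> 'a set \<Rightarrow> (('a \<Rightarrow> 'v) \<Rightarrow> 'k::comm_semiring_1) \<Rightarrow> 'a set \<Rightarrow> (('a \<Rightarrow> 'v) \<Rightarrow> 'k) \<Rightarrow> bool" where
  "consistent Dom X R Y S \<longleftrightarrow>
     (\<exists>T. is_krel Dom (X \<union> Y) T \<and> krel_equiv R (marginal T X) \<and> krel_equiv S (marginal T Y))"

definition hypergraph :: "'a set \<Rightarrow> 'a set set \<Rightarrow> bool" where
  "hypergraph V E \<longleftrightarrow> finite V \<and> (\<forall>X\<in>E. X \<noteq> {} \<and> X \<subseteq> V)"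

definition local_to_global ::
  "'k::comm_semiring_1 itself \<Rightarrow> ('a \<Rightarrow> 'v set) \<Rightarrow> 'a set \<Rightarrow> 'a set set \<Rightarrow> bool" where
  "local_to_global _ Dom V E \<longleftrightarrow>
     (\<forall>Rs :: 'a set \<Rightarrow> ('a \<Rightarrow> 'v) \<Rightarrow> 'k.
        (\<forall>X\<in>E. is_krel Dom X (Rs X)) \<longrightarrow>
        (\<forall>X\<in>E. \<forall>Y\<in>E. consistent Dom X (Rs X) Y (Rs Y)) \<longrightarrow>
        (\<exists>T. is_krel Dom (\<Union>E) T \<and> (\<forall>X\<in>E. krel_equiv (Rs X) (marginal T X))))"

definition induced_edges :: "'a set set \<Rightarrow> 'a set \<Rightarrow> 'a set set" where
  "induced_edges E W = (\<lambda>X. X \<inter> W) ` E - {{}}"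

end

theory Submission
  imports Defs
begin

text \<open>Fix a default value d A in every domain. A K-relation R over X \<inter> W is padded to a
K-relation over X by giving every attribute of X - W its default value; padding commutes with
marginals and preserves consistency. A pairwise consistent family on H[W] therefore pads to a
pairwise consistent family on H (edges disjoint from W carry the unit relation over the empty
set, which is consistent with every nonzero relation by positivity). Its global witness T over
\<Union>E yields the global witness T[\<Union>E \<inter> W] for the original family, because the marginal of a
padded relation on X \<inter> W gives back the relation itself.\<close>

definition pairwise_consistent ::
  "('a \<Rightarrow> 'v set) \<Rightarrow> 'a set set \<Rightarrow> ('a set \<Rightarrow> ('a \<Rightarrow> 'v) \<Rightarrow> 'k::comm_semiring_1) \<Rightarrow> bool" where
  "pairwise_consistent Dom E Rs \<longleftrightarrow> (\<forall>X\<in>E. \<forall>Y\<in>E. consistent Dom X (Rs X) Y (Rs Y))"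

definition globally_consistent ::
  "('a \<Rightarrow> 'v set) \<Rightarrow> 'a set set \<Rightarrow> ('a set \<Rightarrow> ('a \<Rightarrow> 'v) \<Rightarrow> 'k::comm_semiring_1) \<Rightarrow> bool" where
  "globally_consistent Dom E Rs \<longleftrightarrow>
     (\<exists>T. is_krel Dom (\<Union>E) T \<and> (\<forall>X\<in>E. krel_equiv (Rs X) (marginal T X)))"

lemma local_to_global_iff:
  "local_to_global TYPE('k::comm_semiring_1) Dom V E \<longleftrightarrow>
     (\<forall>Rs :: 'a set \<Rightarrow> ('a \<Rightarrow> 'v) \<Rightarrow> 'k. (\<forall>X\<in>E. is_krel Dom X (Rs X)) \<longrightarrow>
        pairwise_consistent Dom E Rs \<longrightarrow> globally_consistent Dom E Rs)"
  unfolding local_to_global_def pairwise_consistent_def globally_consistent_def ..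

subsection \<open>Marginals\<close>

lemma krel_equiv_refl: "krel_equiv R (R :: ('a \<Rightarrow> 'v) \<Rightarrow> 'k::comm_semiring_1)"
  unfolding krel_equiv_def by (rule exI[of _ 1], rule exI[of _ 1]) simp

lemma marginal_conv_sum_superset:
  assumes "finite S" "supp R \<subseteq> S"
  shows "marginal R Y u = (\<Sum>r\<in>{r\<in>S. restrict r Y = u}. R r)"
  unfolding marginal_def
  by (rule sum.mono_neutral_left) (use assms in \<open>auto simp: supp_def\<close>)

lemma supp_marginal_subset: "supp (marginal R Y) \<subseteq> (\<lambda>r. restrict r Y) ` supp R"
  unfolding supp_def marginal_def by (force intro: sum.neutral)

lemma finite_supp_marginal: "finite (supp R) \<Longrightarrow> finite (supp (marginal R Y))"
  by (rule finite_subset[OF supp_marginal_subset]) simp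

lemma is_krel_marginal:
  assumes "is_krel Dom X T" "Y \<subseteq> X"
  shows "is_krel Dom Y (marginal T Y)"
proof -
  have "(\<lambda>r. restrict r Y) ` supp T \<subseteq> Tup Dom Y"
    using assms unfolding is_krel_def Tup_def by (fastforce simp: PiE_iff)
  then show ?thesis
    using supp_marginal_subset[of T Y] finite_supp_marginal[of T Y] assms(1)
    unfolding is_krel_def by blast
qed

lemma marginal_marginal:
  assumes fin: "finite (supp T)" and "Z \<subseteq> Y"
  shows "marginal (marginal T Y) Z = marginal T Z"
proof
  fix v
  let ?f = "\<lambda>r. restrict r Y"
  have rr: "restrict (restrict r Y) Z = restrict r Z" for r :: "'a \<Rightarrow> 'b"
    using \<open>Z \<subseteq> Y\<close> by (intro ext) (auto simp: restrict_def)
  have "marginal (marginal T Y) Z v = (\<Sum>u\<in>{u\<in>?f ` supp T. restrict u Z = v}. marginal T Y u)"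
    by (rule marginal_conv_sum_superset) (use fin supp_marginal_subset in auto)
  also have "\<dots> = (\<Sum>u\<in>{u\<in>?f ` supp T. restrict u Z = v}.
                     sum T {r. r \<in> {r\<in>supp T. restrict r Z = v} \<and> ?f r = u})"
  proof (rule sum.cong[OF refl])
    fix u assume "u \<in> {u\<in>?f ` supp T. restrict u Z = v}"
    then have "{r. r \<in> {r\<in>supp T. restrict r Z = v} \<and> ?f r = u} = {r\<in>supp T. ?f r = u}"
      using rr by auto (metis rr)+
    then show "marginal T Y u = sum T {r. r \<in> {r\<in>supp T. restrict r Z = v} \<and> ?f r = u}"
      unfolding marginal_def by simp
  qed
  also have "\<dots> = marginal T Z v"
    unfolding marginal_def by (rule sum.group) (use fin rr in auto)
  finally show "marginal (marginal T Y) Z v = marginal T Z v" .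
qed

lemma marginal_mult_left:
  fixes R :: "('a \<Rightarrow> 'v) \<Rightarrow> 'k::comm_semiring_1"
  assumes "finite (supp R)"
  shows "marginal (\<lambda>t. a * R t) Y u = a * marginal R Y u"
proof -
  have "marginal (\<lambda>t. a * R t) Y u = (\<Sum>r\<in>{r\<in>supp R. restrict r Y = u}. a * R r)"
    by (rule marginal_conv_sum_superset) (use assms in \<open>auto simp: supp_def\<close>)
  then show ?thesis by (simp add: marginal_def sum_distrib_left)
qed

lemma krel_equiv_marginal:
  fixes R S :: "('a \<Rightarrow> 'v) \<Rightarrow> 'k::comm_semiring_1"
  assumes "finite (supp R)" "finite (supp S)" "krel_equiv R S"
  shows "krel_equiv (marginal R Y) (marginal S Y)"
proof -
  obtain a b where ab: "a \<noteq> 0" "b \<noteq> 0" "(\<lambda>t. a * R t) = (\<lambda>t. b * S t)"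
    using assms(3) unfolding krel_equiv_def by auto
  then have "a * marginal R Y u = b * marginal S Y u" for u
    using marginal_mult_left[OF assms(1), of a Y u] marginal_mult_left[OF assms(2), of b Y u] by simp
  then show ?thesis using ab unfolding krel_equiv_def by blast
qed

lemma marginal_full:
  assumes "is_krel Dom X T"
  shows "marginal T X = T"
proof
  fix u
  have "{r\<in>supp T. restrict r X = u} = {r\<in>supp T. r = u}"
    using assms by (auto simp: is_krel_def Tup_def PiE_def extensional_restrict)
  also have "\<dots> = (if T u = 0 then {} else {u})" by (auto simp: supp_def)
  finally show "marginal T X u = T u" unfolding marginal_def by auto
qed

lemma consistent_commute: "consistent Dom X R Y S \<Longrightarrow> consistent Dom Y S X R"
  unfolding consistent_def by (simp add: sup_commute) blast

subsection \<open>Positivity\<close>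

lemma sum_neq_zero_positive:
  fixes f :: "'b \<Rightarrow> 'k::comm_semiring_1"
  assumes "positive_semiring TYPE('k)"
  shows "finite A \<Longrightarrow> A \<noteq> {} \<Longrightarrow> \<forall>x\<in>A. f x \<noteq> 0 \<Longrightarrow> sum f A \<noteq> 0"
proof (induction A rule: finite_ne_induct)
  case (insert x F)
  have "f x + sum f F \<noteq> 0"
    using assms insert.prems unfolding positive_semiring_def by blast
  then show ?case using insert.hyps by simp
qed simp

lemma marginal_restrict_neq_zero:
  fixes T :: "('a \<Rightarrow> 'v) \<Rightarrow> 'k::comm_semiring_1"
  assumes "positive_semiring TYPE('k)" "finite (supp T)" "r \<in> supp T"
  shows "marginal T Z (restrict r Z) \<noteq> 0"
  unfolding marginal_def
  by (rule sum_neq_zero_positive[OF assms(1)]) (use assms in \<open>auto simp: supp_def\<close>)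

lemma krel_equiv_supp_empty_iff:
  fixes R S :: "('a \<Rightarrow> 'v) \<Rightarrow> 'k::comm_semiring_1"
  assumes "positive_semiring TYPE('k)" "krel_equiv R S"
  shows "supp R = {} \<longleftrightarrow> supp S = {}"
proof -
  obtain a b where "a \<noteq> 0" "b \<noteq> 0" "\<forall>t. a * R t = b * S t"
    using assms(2) unfolding krel_equiv_def by blast
  then have "R t = 0 \<longleftrightarrow> S t = 0" for t
    using assms(1) unfolding positive_semiring_def by (metis mult_zero_right)
  then show ?thesis unfolding supp_def by blast
qed

lemma consistent_supp_empty:
  fixes R S :: "('a \<Rightarrow> 'v) \<Rightarrow> 'k::comm_semiring_1"
  assumes pos: "positive_semiring TYPE('k)" and "consistent Dom X R Y S" "supp R = {}"
  shows "supp S = {}"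
proof -
  obtain T where T: "finite (supp T)" "krel_equiv R (marginal T X)" "krel_equiv S (marginal T Y)"
    using assms(2) unfolding consistent_def is_krel_def by blast
  have "supp (marginal T X) = {}"
    using krel_equiv_supp_empty_iff[OF pos T(2)] \<open>supp R = {}\<close> by simp
  then have "supp T = {}"
    using marginal_restrict_neq_zero[OF pos T(1)] unfolding supp_def by blast
  then have "supp (marginal T Y) = {}"
    unfolding supp_def marginal_def by simp
  then show ?thesis using krel_equiv_supp_empty_iff[OF pos T(3)] by simp
qed

lemma globally_consistent_zero:
  fixes Rs :: "'a set \<Rightarrow> ('a \<Rightarrow> 'v) \<Rightarrow> 'k::comm_semiring_1"
  assumes "\<forall>X\<in>E. supp (Rs X) = {}"
  shows "globally_consistent Dom E Rs"
proof -
  have "krel_equiv (Rs X) (marginal (\<lambda>_. 0) X)" if "X \<in> E" for X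
  proof -
    have "Rs X = marginal (\<lambda>_. 0::'k) X"
      using assms that by (auto simp: supp_def marginal_def)
    then show ?thesis using krel_equiv_refl by metis
  qed
  moreover have "is_krel Dom (\<Union>E) (\<lambda>_. 0::'k)" by (simp add: is_krel_def supp_def)
  ultimately show ?thesis unfolding globally_consistent_def by blast
qed

subsection \<open>The unit relation over the empty set\<close>

text \<open>The only tuple over the empty set is \<lambda>_. undefined.\<close>

definition unit_krel :: "('a \<Rightarrow> 'v) \<Rightarrow> 'k::{zero,one}" where
  "unit_krel u = (if u = (\<lambda>_. undefined) then 1 else 0)"

lemma is_krel_unit: "is_krel Dom {} unit_krel"
proof -
  have "supp unit_krel \<subseteq> {\<lambda>_. undefined}" unfolding supp_def unit_krel_def by auto
  then show ?thesis unfolding is_krel_def Tup_def by (auto intro: finite_subset)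
qed

lemma consistent_unit_unit:
  "consistent Dom {} (unit_krel :: ('a \<Rightarrow> 'v) \<Rightarrow> 'k::comm_semiring_1) {} unit_krel"
  unfolding consistent_def
  using is_krel_unit marginal_full[OF is_krel_unit] krel_equiv_refl by (metis sup_idem)

lemma consistent_unit:
  fixes S :: "('a \<Rightarrow> 'v) \<Rightarrow> 'k::comm_semiring_1"
  assumes pos: "positive_semiring TYPE('k)" and S: "is_krel Dom Y S" and "supp S \<noteq> {}"
  shows "consistent Dom {} unit_krel Y S"
proof -
  define s where "s = sum S (supp S)"
  have "s \<noteq> 0" unfolding s_def
    by (rule sum_neq_zero_positive[OF pos]) (use assms in \<open>auto simp: is_krel_def supp_def\<close>)
  moreover have "marginal S {} u = (if u = (\<lambda>_. undefined) then s else 0)" for u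
    unfolding marginal_def s_def by (simp add: restrict_def)
  ultimately have "krel_equiv unit_krel (marginal S {})"
    unfolding krel_equiv_def unit_krel_def by (intro exI[of _ s] exI[of _ 1]) simp
  then show ?thesis
    unfolding consistent_def using S marginal_full[OF S] krel_equiv_refl by fastforce
qed

definition with_unit :: "('a set \<Rightarrow> ('a \<Rightarrow> 'v) \<Rightarrow> 'k) \<Rightarrow> 'a set \<Rightarrow> ('a \<Rightarrow> 'v) \<Rightarrow> 'k::{zero,one}" where
  "with_unit Rs Z = (if Z = {} then unit_krel else Rs Z)"

lemma is_krel_with_unit:
  assumes "\<forall>Z\<in>F. is_krel Dom Z (Rs Z)" "Z \<in> insert {} F"
  shows "is_krel Dom Z (with_unit Rs Z)"
  using assms is_krel_unit by (auto simp: with_unit_def)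

lemma pairwise_consistent_with_unit:
  fixes Rs :: "'a set \<Rightarrow> ('a \<Rightarrow> 'v) \<Rightarrow> 'k::comm_semiring_1"
  assumes pos: "positive_semiring TYPE('k)"
    and kr: "\<forall>Z\<in>F. is_krel Dom Z (Rs Z)" and nz: "\<forall>Z\<in>F. supp (Rs Z) \<noteq> {}"
    and "pairwise_consistent Dom F Rs"
  shows "pairwise_consistent Dom (insert {} F) (with_unit Rs)"
proof -
  have unit: "consistent Dom {} unit_krel Z (with_unit Rs Z)" if "Z \<in> insert {} F" for Z
  proof (cases "Z = {}")
    case False
    then have "Z \<in> F" using that by simp
    then have "consistent Dom {} unit_krel Z (Rs Z)"
      using kr nz by (blast intro: consistent_unit[OF pos])
    then show ?thesis using False by (simp add: with_unit_def)
  qed (simp add: with_unit_def consistent_unit_unit)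
  show ?thesis
    unfolding pairwise_consistent_def
  proof (intro ballI)
    fix X Y assume XY: "X \<in> insert {} F" "Y \<in> insert {} F"
    consider "X = {}" | "Y = {}" | "X \<in> F" "Y \<in> F" "X \<noteq> {}" "Y \<noteq> {}" using XY by blast
    then show "consistent Dom X (with_unit Rs X) Y (with_unit Rs Y)"
    proof cases
      case 1
      then show ?thesis using unit[OF XY(2)] by (simp add: with_unit_def)
    next
      case 2
      then show ?thesis using consistent_commute[OF unit[OF XY(1)]] by (simp add: with_unit_def)
    next
      case 3
      then show ?thesis using assms(4) by (simp add: with_unit_def pairwise_consistent_def)
    qed
  qed
qed

subsection \<open>Padding with default values\<close>

definition pad_tuple :: "('a \<Rightarrow> 'v) \<Rightarrow> 'a set \<Rightarrow> 'a set \<Rightarrow> ('a \<Rightarrow> 'v) \<Rightarrow> 'a \<Rightarrow> 'v" where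
  "pad_tuple d W X u = (\<lambda>A. if A \<in> X then (if A \<in> W then u A else d A) else undefined)"

definition pad :: "('a \<Rightarrow> 'v set) \<Rightarrow> ('a \<Rightarrow> 'v) \<Rightarrow> 'a set \<Rightarrow> 'a set \<Rightarrow>
    (('a \<Rightarrow> 'v) \<Rightarrow> 'k::zero) \<Rightarrow> ('a \<Rightarrow> 'v) \<Rightarrow> 'k" where
  "pad Dom d W X R t = (if t \<in> Tup Dom X \<and> (\<forall>A\<in>X-W. t A = d A) then R (restrict t (X \<inter> W)) else 0)"

lemma pad_tuple_in_Tup:
  "\<forall>A. d A \<in> Dom A \<Longrightarrow> u \<in> Tup Dom (X \<inter> W) \<Longrightarrow> pad_tuple d W X u \<in> Tup Dom X"
  by (auto simp: Tup_def PiE_iff pad_tuple_def extensional_def)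

lemma restrict_pad_tuple:
  assumes "u \<in> Tup Dom (X \<inter> W)"
  shows "restrict (pad_tuple d W X u) (X \<inter> W) = u"
proof
  fix A show "restrict (pad_tuple d W X u) (X \<inter> W) A = u A"
    using assms PiE_arb[of u "X \<inter> W" Dom A] by (auto simp: Tup_def pad_tuple_def)
qed

lemma inj_on_pad_tuple: "inj_on (pad_tuple d W X) (Tup Dom (X \<inter> W))"
  by (metis inj_onI restrict_pad_tuple)

lemma pad_tuple_restrict:
  assumes "t \<in> Tup Dom X" "\<forall>A\<in>X-W. t A = d A"
  shows "pad_tuple d W X (restrict t (X \<inter> W)) = t"
proof
  fix A show "pad_tuple d W X (restrict t (X \<inter> W)) A = t A"
    using assms PiE_arb[of t X Dom A] by (auto simp: Tup_def pad_tuple_def)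
qed

lemma pad_pad_tuple:
  assumes "\<forall>A. d A \<in> Dom A" "u \<in> Tup Dom (X \<inter> W)"
  shows "pad Dom d W X R (pad_tuple d W X u) = R u"
proof -
  have "\<forall>A\<in>X-W. pad_tuple d W X u A = d A" by (simp add: pad_tuple_def)
  then show ?thesis
    using pad_tuple_in_Tup[OF assms] restrict_pad_tuple[OF assms(2)] unfolding pad_def by simp
qed

lemma supp_pad:
  assumes d: "\<forall>A. d A \<in> Dom A" and R: "supp R \<subseteq> Tup Dom (X \<inter> W)"
  shows "supp (pad Dom d W X R) = pad_tuple d W X ` supp R"
proof
  show "supp (pad Dom d W X R) \<subseteq> pad_tuple d W X ` supp R"
  proof
    fix t assume "t \<in> supp (pad Dom d W X R)"
    then have t: "t \<in> Tup Dom X" "\<forall>A\<in>X-W. t A = d A" "restrict t (X \<inter> W) \<in> supp R"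
      unfolding supp_def pad_def by (auto split: if_splits)
    then show "t \<in> pad_tuple d W X ` supp R"
      using pad_tuple_restrict[OF t(1,2)] by (metis image_eqI)
  qed
  show "pad_tuple d W X ` supp R \<subseteq> supp (pad Dom d W X R)"
  proof
    fix t assume "t \<in> pad_tuple d W X ` supp R"
    then obtain u where "u \<in> supp R" "t = pad_tuple d W X u" by blast
    then show "t \<in> supp (pad Dom d W X R)"
      using R pad_pad_tuple[OF d, of u X W R] by (auto simp: supp_def)
  qed
qed

lemma is_krel_pad:
  assumes d: "\<forall>A. d A \<in> Dom A" and R: "is_krel Dom (X \<inter> W) R"
  shows "is_krel Dom X (pad Dom d W X R)"
proof -
  have "supp (pad Dom d W X R) = pad_tuple d W X ` supp R"
    using supp_pad[OF d] R unfolding is_krel_def by blast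
  then show ?thesis using pad_tuple_in_Tup[OF d] R unfolding is_krel_def by auto
qed

lemma restrict_pad_tuple_eq_iff:
  assumes "u \<in> Tup Dom (Z \<inter> W)" "X \<subseteq> Z" "s \<in> Tup Dom X" "\<forall>A\<in>X-W. s A = d A"
  shows "restrict (pad_tuple d W Z u) X = s \<longleftrightarrow> restrict u (X \<inter> W) = restrict s (X \<inter> W)"
proof
  assume "restrict (pad_tuple d W Z u) X = s"
  then show "restrict u (X \<inter> W) = restrict s (X \<inter> W)"
    using assms(2) by (auto simp: fun_eq_iff pad_tuple_def split: if_splits)
next
  assume h: "restrict u (X \<inter> W) = restrict s (X \<inter> W)"
  show "restrict (pad_tuple d W Z u) X = s"
  proof
    fix A
    have "restrict u (X \<inter> W) A = restrict s (X \<inter> W) A" using h by simp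
    then show "restrict (pad_tuple d W Z u) X A = s A"
      using assms PiE_arb[of s X Dom A] by (auto simp: pad_tuple_def Tup_def)
  qed
qed

lemma marginal_pad:
  assumes d: "\<forall>A. d A \<in> Dom A" and XZ: "X \<subseteq> Z" and R: "is_krel Dom (Z \<inter> W) R"
  shows "marginal (pad Dom d W Z R) X = pad Dom d W X (marginal R (X \<inter> W))"
proof
  fix s
  let ?e = "pad_tuple d W Z"
  let ?U = "{u\<in>supp R. restrict (?e u) X = s}"
  have RT: "supp R \<subseteq> Tup Dom (Z \<inter> W)" using R by (simp add: is_krel_def)
  have "inj_on ?e ?U"
    by (rule inj_on_subset[OF inj_on_pad_tuple]) (use RT in blast)
  moreover have "{t \<in> ?e ` supp R. restrict t X = s} = ?e ` ?U" by auto
  ultimately have "marginal (pad Dom d W Z R) X s = sum (\<lambda>u. pad Dom d W Z R (?e u)) ?U"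
    unfolding marginal_def supp_pad[OF d RT] by (simp add: sum.reindex)
  also have "\<dots> = sum R ?U"
    using RT pad_pad_tuple[OF d] by (intro sum.cong) blast+
  finally have eq: "marginal (pad Dom d W Z R) X s = sum R ?U" .
  show "marginal (pad Dom d W Z R) X s = pad Dom d W X (marginal R (X \<inter> W)) s"
  proof (cases "s \<in> Tup Dom X \<and> (\<forall>A\<in>X-W. s A = d A)")
    case True
    then have "?U = {u\<in>supp R. restrict u (X \<inter> W) = restrict s (X \<inter> W)}"
      using restrict_pad_tuple_eq_iff[OF _ XZ] RT by blast
    then show ?thesis using eq True unfolding pad_def marginal_def by simp
  next
    case False
    have "?U = {}"
    proof (rule ccontr)
      assume "?U \<noteq> {}"
      then obtain u where u: "u \<in> supp R" "restrict (?e u) X = s" by blast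
      have "?e u \<in> Tup Dom Z" using pad_tuple_in_Tup[OF d] u(1) RT by blast
      then show False using False u(2) XZ by (auto simp: Tup_def PiE_iff pad_tuple_def)
    qed
    then have "marginal (pad Dom d W Z R) X s = 0" using eq by (simp only: sum.empty)
    then show ?thesis using False by (auto simp: pad_def[of Dom d W X])
  qed
qed

lemma krel_equiv_pad:
  fixes R S :: "('a \<Rightarrow> 'v) \<Rightarrow> 'k::comm_semiring_1"
  assumes "krel_equiv R S"
  shows "krel_equiv (pad Dom d W X R) (pad Dom d W X S)"
  using assms unfolding krel_equiv_def pad_def by auto

lemma marginal_pad_self:
  assumes d: "\<forall>A. d A \<in> Dom A" and R: "is_krel Dom (X \<inter> W) R"
  shows "marginal (pad Dom d W X R) (X \<inter> W) = R"
proof -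
  have "marginal (pad Dom d W X R) (X \<inter> W) = pad Dom d W (X \<inter> W) R"
    using marginal_pad[OF d _ R, of "X \<inter> W"] marginal_full[OF R] by (simp add: Int_absorb2)
  also have "\<dots> = R"
    using R unfolding pad_def is_krel_def supp_def
    by (auto simp: fun_eq_iff Tup_def PiE_def extensional_restrict Int_absorb2)
  finally show ?thesis .
qed

lemma consistent_pad:
  fixes R S :: "('a \<Rightarrow> 'v) \<Rightarrow> 'k::comm_semiring_1"
  assumes d: "\<forall>A. d A \<in> Dom A" and "consistent Dom (X \<inter> W) R (Y \<inter> W) S"
  shows "consistent Dom X (pad Dom d W X R) Y (pad Dom d W Y S)"
proof -
  obtain T where T: "is_krel Dom ((X \<union> Y) \<inter> W) T" "krel_equiv R (marginal T (X \<inter> W))"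
      "krel_equiv S (marginal T (Y \<inter> W))"
    using assms(2) unfolding consistent_def by (auto simp: Int_Un_distrib2)
  have "marginal (pad Dom d W (X \<union> Y) T) X = pad Dom d W X (marginal T (X \<inter> W))"
    and "marginal (pad Dom d W (X \<union> Y) T) Y = pad Dom d W Y (marginal T (Y \<inter> W))"
    by (rule marginal_pad[OF d _ T(1)]; simp)+
  then show ?thesis
    unfolding consistent_def using is_krel_pad[OF d T(1)] krel_equiv_pad T(2,3) by metis
qed

lemma krel_equiv_marginal_unpad:
  fixes R T :: "('a \<Rightarrow> 'v) \<Rightarrow> 'k::comm_semiring_1"
  assumes d: "\<forall>A. d A \<in> Dom A" and R: "is_krel Dom (X \<inter> W) R" and T: "finite (supp T)"
    and "krel_equiv (pad Dom d W X R) (marginal T X)"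
  shows "krel_equiv R (marginal T (X \<inter> W))"
proof -
  have "finite (supp (pad Dom d W X R))" using is_krel_pad[OF d R] by (simp add: is_krel_def)
  from krel_equiv_marginal[OF this finite_supp_marginal[OF T, of X] assms(4)]
  have "krel_equiv (marginal (pad Dom d W X R) (X \<inter> W)) (marginal (marginal T X) (X \<inter> W))" .
  moreover have "marginal (marginal T X) (X \<inter> W) = marginal T (X \<inter> W)"
    by (rule marginal_marginal[OF T]) blast
  ultimately show ?thesis unfolding marginal_pad_self[OF d R] by simp
qed

subsection \<open>Induced hypergraphs\<close>

lemma Int_in_induced_edges: "X \<in> E \<Longrightarrow> X \<inter> W \<in> insert {} (induced_edges E W)"
  by (auto simp: induced_edges_def)

lemma Union_induced_edges: "\<Union>(induced_edges E W) = \<Union>E \<inter> W"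
  by (auto simp: induced_edges_def)

lemma pairwise_consistent_supp_empty:
  fixes Rs :: "'a set \<Rightarrow> ('a \<Rightarrow> 'v) \<Rightarrow> 'k::comm_semiring_1"
  assumes "positive_semiring TYPE('k)" "pairwise_consistent Dom F Rs"
    and "Z \<in> F" "supp (Rs Z) = {}"
  shows "\<forall>Y\<in>F. supp (Rs Y) = {}"
  using assms consistent_supp_empty[OF assms(1)] unfolding pairwise_consistent_def by blast

definition pad_family :: "('a \<Rightarrow> 'v set) \<Rightarrow> ('a \<Rightarrow> 'v) \<Rightarrow> 'a set \<Rightarrow>
    ('a set \<Rightarrow> ('a \<Rightarrow> 'v) \<Rightarrow> 'k) \<Rightarrow> 'a set \<Rightarrow> ('a \<Rightarrow> 'v) \<Rightarrow> 'k::{zero,one}" where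
  "pad_family Dom d W Rs X = pad Dom d W X (with_unit Rs (X \<inter> W))"

lemma is_krel_pad_family:
  assumes d: "\<forall>A. d A \<in> Dom A" and kr: "\<forall>Z\<in>induced_edges E W. is_krel Dom Z (Rs Z)"
    and "X \<in> E"
  shows "is_krel Dom X (pad_family Dom d W Rs X)"
  unfolding pad_family_def
  using is_krel_pad[OF d is_krel_with_unit[OF kr Int_in_induced_edges[OF \<open>X \<in> E\<close>]]] .

lemma pairwise_consistent_pad_family:
  fixes Rs :: "'a set \<Rightarrow> ('a \<Rightarrow> 'v) \<Rightarrow> 'k::comm_semiring_1"
  assumes pos: "positive_semiring TYPE('k)" and d: "\<forall>A. d A \<in> Dom A"
    and kr: "\<forall>Z\<in>induced_edges E W. is_krel Dom Z (Rs Z)"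
    and nz: "\<forall>Z\<in>induced_edges E W. supp (Rs Z) \<noteq> {}"
    and pc: "pairwise_consistent Dom (induced_edges E W) Rs"
  shows "pairwise_consistent Dom E (pad_family Dom d W Rs)"
proof -
  note pcU = pairwise_consistent_with_unit[OF pos kr nz pc, unfolded pairwise_consistent_def]
  show ?thesis
    unfolding pairwise_consistent_def pad_family_def
    using consistent_pad[OF d pcU[rule_format, OF Int_in_induced_edges Int_in_induced_edges]]
    by blast
qed

lemma globally_consistent_unpad:
  fixes Rs :: "'a set \<Rightarrow> ('a \<Rightarrow> 'v) \<Rightarrow> 'k::comm_semiring_1"
  assumes d: "\<forall>A. d A \<in> Dom A" and kr: "\<forall>Z\<in>induced_edges E W. is_krel Dom Z (Rs Z)"
    and "globally_consistent Dom E (pad_family Dom d W Rs)"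
  shows "globally_consistent Dom (induced_edges E W) Rs"
proof -
  obtain T where T: "is_krel Dom (\<Union>E) T"
      "\<forall>X\<in>E. krel_equiv (pad_family Dom d W Rs X) (marginal T X)"
    using assms(3) unfolding globally_consistent_def by blast
  have fin: "finite (supp T)" using T(1) by (simp add: is_krel_def)
  have "krel_equiv (Rs Z) (marginal (marginal T (\<Union>E \<inter> W)) Z)"
    if Z: "Z \<in> induced_edges E W" for Z
  proof -
    obtain X where X: "X \<in> E" "Z = X \<inter> W" "Z \<noteq> {}"
      using Z by (auto simp: induced_edges_def)
    have "krel_equiv (with_unit Rs Z) (marginal T Z)"
      using krel_equiv_marginal_unpad[OF d is_krel_with_unit[OF kr Int_in_induced_edges] fin]
        T(2) X by (auto simp: pad_family_def)
    moreover have "marginal (marginal T (\<Union>E \<inter> W)) Z = marginal T Z"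
      by (rule marginal_marginal[OF fin]) (use X in blast)
    ultimately show ?thesis using X(3) by (simp add: with_unit_def)
  qed
  then show ?thesis
    using is_krel_marginal[OF T(1), of "\<Union>E \<inter> W"]
    unfolding globally_consistent_def Union_induced_edges by blast
qed

theorem lemma15:
  fixes Dom :: "'a \<Rightarrow> 'v set" and V :: "'a set" and E :: "'a set set" and W :: "'a set"
  assumes "positive_semiring TYPE('k::comm_semiring_1)"
    and "\<forall>A. Dom A \<noteq> {}"
    and "hypergraph V E"
    and "local_to_global TYPE('k) Dom V E"
    and "W \<subseteq> V"
  shows "local_to_global TYPE('k) Dom W (induced_edges E W)"
  unfolding local_to_global_iff
proof (intro allI impI)
  fix Rs :: "'a set \<Rightarrow> ('a \<Rightarrow> 'v) \<Rightarrow> 'k"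
  assume kr: "\<forall>Z\<in>induced_edges E W. is_krel Dom Z (Rs Z)"
    and pc: "pairwise_consistent Dom (induced_edges E W) Rs"
  show "globally_consistent Dom (induced_edges E W) Rs"
  proof (cases "\<exists>Z\<in>induced_edges E W. supp (Rs Z) = {}")
    case True
    then obtain Z where "Z \<in> induced_edges E W" "supp (Rs Z) = {}" by blast
    then show ?thesis
      by (intro globally_consistent_zero pairwise_consistent_supp_empty[OF assms(1) pc])
  next
    case False
    then have nz: "\<forall>Z\<in>induced_edges E W. supp (Rs Z) \<noteq> {}" by blast
    define d where "d A = (SOME x. x \<in> Dom A)" for A
    have d: "\<forall>A. d A \<in> Dom A" using assms(2) by (simp add: d_def some_in_eq)
    have "globally_consistent Dom E (pad_family Dom d W Rs)"
      using local_to_global_iff[THEN iffD1, OF assms(4), rule_format,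
          OF is_krel_pad_family[OF d kr] pairwise_consistent_pad_family[OF assms(1) d kr nz pc]] .
    then show ?thesis by (rule globally_consistent_unpad[OF d kr])
  qed
qed

end
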